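(* For every $\theta,\bar\theta\in\mathbb R^m$ there exists a stochastic policy $\mu_{\theta,\bar\theta}:\mathcal S\to\Delta_{|\mathcal A|}$ such that \[ V_\theta-V_{\bar\theta}=\Pi^{\mu_{\theta,\bar\theta}}\Phi(\theta-\bar\theta). \] Moreover, $\mu_{\theta,\bar\theta}$ can be chosen as a measurable function of $(\theta,\bar\theta)$.
   Context: Let $\mathcal S=\{1,\dots,|\mathcal S|\}$ and $\mathcal A=\{1,\dots,|\mathcal A|\}$ be finite sets. State-action vectors in $\mathbb R^{|\mathcal S||\mathcal A|}$ are ordered as $(1,1),(2,1),\dots,(|\mathcal S|,1),(1,2),\dots$. The feature matrix $\Phi\in\mathbb R^{|\mathcal S||\mathcal A|\times m}$ has rows $\phi(s,a)^\top$. For $\theta\in\mathbb R^m$, $V_\theta\in\mathbb R^{|\mathcal S|}$ is defined by $V_\theta(s)=\max_{a\in\mathcal A}\phi(s,a)^\top\theta$. A stochastic policy is a map $\mu:\mathcal S\to\Delta_{|\mathcal A|}$, where $\Delta_{|\mathcal A|}$ is the probability simplex. The matrix $\Pi^\mu\in\mathbb R^{|\mathcal S|\times|\mathcal S||\mathcal A|}$ has entry $\mu(a\mid s)$ at row $s$, column $(s,a)$, and zeros elsewhere, so $(\Pi^\mu Q)(s)=\sum_a\mu(a\mid s)Q(s,a)$. *)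

theory Defs
  imports "HOL-Analysis.Analysis"
begin

text \<open>States: finite type 's; actions: finite type 'a; parameters: real^'m.
  The feature matrix Phi is given by its rows phi s a.\<close>

definition Vtheta :: "('s \<Rightarrow> 'a::finite \<Rightarrow> real^'m) \<Rightarrow> real^'m \<Rightarrow> 's \<Rightarrow> real" where
  "Vtheta phi \<theta> s = Max ((\<lambda>a. phi s a \<bullet> \<theta>) ` UNIV)"

definition Phi_apply :: "('s \<Rightarrow> 'a \<Rightarrow> real^'m) \<Rightarrow> real^'m \<Rightarrow> 's \<Rightarrow> 'a \<Rightarrow> real" where
  "Phi_apply phi \<theta> s a = phi s a \<bullet> \<theta>"

text \<open>A stochastic policy: mu s a = mu(a|s), each mu s in the probability simplex.\<close>
definition stochastic_policy :: "('s \<Rightarrow> 'a::finite \<Rightarrow> real) \<Rightarrow> bool" where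
  "stochastic_policy mu \<longleftrightarrow> (\<forall>s. (\<forall>a. 0 \<le> mu s a) \<and> (\<Sum>a\<in>UNIV. mu s a) = 1)"

definition Pi_apply :: "('s \<Rightarrow> 'a::finite \<Rightarrow> real) \<Rightarrow> ('s \<Rightarrow> 'a \<Rightarrow> real) \<Rightarrow> 's \<Rightarrow> real" where
  "Pi_apply mu Q s = (\<Sum>a\<in>UNIV. mu s a * Q s a)"

end

theory Submission
  imports Defs
begin

text \<open>Let \<open>g\<^sub>\<theta>\<close> be the uniform distribution over the maximising actions of
  \<open>\<phi>(s,\<cdot>)\<^sup>T\<theta>\<close>. Averaging a linear function under any policy gives at most its maximum,
  so with \<open>\<delta> = \<theta> - \<theta>'\<close> we get
  \<open>\<Pi>\<^bsup>g\<^sub>\<theta>'\<^esup>\<Phi>\<delta> \<le> V\<^sub>\<theta> - V\<^sub>\<theta>' \<le> \<Pi>\<^bsup>g\<^sub>\<theta>\<^esup>\<Phi>\<delta>\<close> statewise. A statewise convex combination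
  of \<open>g\<^sub>\<theta>\<close> and \<open>g\<^sub>\<theta>'\<close>, with weight given by an explicit formula, therefore attains
  \<open>V\<^sub>\<theta> - V\<^sub>\<theta>'\<close> exactly. Every ingredient is built from inner products, \<open>Max\<close>,
  finite sums, equality tests and division, hence is Borel measurable in \<open>(\<theta>, \<theta>')\<close>.\<close>

lemma Vtheta_ge: "phi s a \<bullet> \<theta> \<le> Vtheta phi \<theta> s"
  unfolding Vtheta_def by (rule Max_ge) auto

lemma Vtheta_attained: "\<exists>a. phi s a \<bullet> \<theta> = Vtheta phi \<theta> s"
proof -
  have "Vtheta phi \<theta> s \<in> (\<lambda>a. phi s a \<bullet> \<theta>) ` UNIV"
    unfolding Vtheta_def by (rule Max_in) auto
  then show ?thesis by auto
qed

lemma Pi_apply_le_Vtheta: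
  assumes "stochastic_policy mu"
  shows "Pi_apply mu (Phi_apply phi \<theta>) s \<le> Vtheta phi \<theta> s"
proof -
  have "Pi_apply mu (Phi_apply phi \<theta>) s \<le> (\<Sum>a\<in>UNIV. mu s a * Vtheta phi \<theta> s)"
    unfolding Pi_apply_def Phi_apply_def
    using assms by (intro sum_mono mult_left_mono Vtheta_ge) (auto simp: stochastic_policy_def)
  also have "\<dots> = Vtheta phi \<theta> s"
    using assms by (simp add: stochastic_policy_def sum_distrib_right[symmetric])
  finally show ?thesis .
qed

lemma Pi_apply_Phi_apply_diff:
  "Pi_apply mu (Phi_apply phi (\<theta> - \<theta>')) s
     = Pi_apply mu (Phi_apply phi \<theta>) s - Pi_apply mu (Phi_apply phi \<theta>') s"
  unfolding Pi_apply_def Phi_apply_def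
  by (simp add: inner_diff_right right_diff_distrib sum_subtractf)

definition greedy_policy :: "('s \<Rightarrow> 'a::finite \<Rightarrow> real^'m) \<Rightarrow> real^'m \<Rightarrow> 's \<Rightarrow> 'a \<Rightarrow> real" where
  "greedy_policy phi \<theta> s a =
     of_bool (phi s a \<bullet> \<theta> = Vtheta phi \<theta> s)
     / (\<Sum>b\<in>UNIV. of_bool (phi s b \<bullet> \<theta> = Vtheta phi \<theta> s))"

lemma stochastic_policy_greedy_policy: "stochastic_policy (greedy_policy phi \<theta>)"
  using Vtheta_attained[of phi _ \<theta>]
  unfolding stochastic_policy_def greedy_policy_def
  by (simp add: sum_divide_distrib[symmetric])

lemma Pi_apply_greedy_policy:
  "Pi_apply (greedy_policy phi \<theta>) (Phi_apply phi \<theta>) s = Vtheta phi \<theta> s"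
proof -
  have "Pi_apply (greedy_policy phi \<theta>) (Phi_apply phi \<theta>) s
          = (\<Sum>a\<in>UNIV. greedy_policy phi \<theta> s a * Vtheta phi \<theta> s)"
    unfolding Pi_apply_def Phi_apply_def by (rule sum.cong) (auto simp: greedy_policy_def)
  also have "\<dots> = Vtheta phi \<theta> s"
    using stochastic_policy_greedy_policy[of phi \<theta>]
    by (simp add: stochastic_policy_def sum_distrib_right[symmetric])
  finally show ?thesis .
qed

lemma Vtheta_diff_bounds:
  "Pi_apply (greedy_policy phi \<theta>') (Phi_apply phi (\<theta> - \<theta>')) s \<le> Vtheta phi \<theta> s - Vtheta phi \<theta>' s"
  "Vtheta phi \<theta> s - Vtheta phi \<theta>' s \<le> Pi_apply (greedy_policy phi \<theta>) (Phi_apply phi (\<theta> - \<theta>')) s"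
  using Pi_apply_le_Vtheta[OF stochastic_policy_greedy_policy, of phi \<theta>' phi \<theta> s]
    Pi_apply_le_Vtheta[OF stochastic_policy_greedy_policy, of phi \<theta> phi \<theta>' s]
  by (simp_all add: Pi_apply_Phi_apply_diff Pi_apply_greedy_policy)

definition interpolation_weight :: "real \<Rightarrow> real \<Rightarrow> real \<Rightarrow> real" where
  "interpolation_weight l u d = (if u = l then 1 else (d - l) / (u - l))"

lemma interpolation_weight:
  assumes "l \<le> d" "d \<le> u"
  shows "0 \<le> interpolation_weight l u d" "interpolation_weight l u d \<le> 1"
    and "interpolation_weight l u d * u + (1 - interpolation_weight l u d) * l = d"
  using assms by (auto simp: interpolation_weight_def field_simps)

definition interpolating_policy ::
    "('s \<Rightarrow> 'a::finite \<Rightarrow> real) \<Rightarrow> ('s \<Rightarrow> 'a \<Rightarrow> real) \<Rightarrow> ('s \<Rightarrow> 'a \<Rightarrow> real) \<Rightarrow> ('s \<Rightarrow> real)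
       \<Rightarrow> 's \<Rightarrow> 'a \<Rightarrow> real" where
  "interpolating_policy mu nu Q d s a =
     interpolation_weight (Pi_apply nu Q s) (Pi_apply mu Q s) (d s) * mu s a
     + (1 - interpolation_weight (Pi_apply nu Q s) (Pi_apply mu Q s) (d s)) * nu s a"

lemma
  assumes mu: "stochastic_policy mu" and nu: "stochastic_policy nu"
    and bounds: "\<And>s. Pi_apply nu Q s \<le> d s" "\<And>s. d s \<le> Pi_apply mu Q s"
  shows stochastic_policy_interpolating_policy: "stochastic_policy (interpolating_policy mu nu Q d)"
    and Pi_apply_interpolating_policy: "Pi_apply (interpolating_policy mu nu Q d) Q = d"
proof -
  note w = interpolation_weight[OF bounds(1,2)]
  show "stochastic_policy (interpolating_policy mu nu Q d)"
    unfolding stochastic_policy_def interpolating_policy_def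
    using mu nu w(1,2)
    by (auto simp: stochastic_policy_def sum.distrib sum_distrib_left[symmetric])
  show "Pi_apply (interpolating_policy mu nu Q d) Q = d"
  proof
    fix s
    show "Pi_apply (interpolating_policy mu nu Q d) Q s = d s"
      using w(3)[of s]
      by (simp add: Pi_apply_def interpolating_policy_def distrib_right sum.distrib
          sum_distrib_left mult.assoc)
  qed
qed

lemma measurable_Vtheta[measurable]:
  fixes phi :: "'s \<Rightarrow> 'a::finite \<Rightarrow> real^'m"
  assumes [measurable]: "f \<in> borel_measurable M"
  shows "(\<lambda>x. Vtheta phi (f x) s) \<in> borel_measurable M"
  unfolding Vtheta_def by measurable

lemma measurable_Phi_apply[measurable]:
  assumes [measurable]: "f \<in> borel_measurable M"
  shows "(\<lambda>x. Phi_apply phi (f x) s a) \<in> borel_measurable M"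
  unfolding Phi_apply_def by measurable

lemma measurable_greedy_policy[measurable]:
  fixes phi :: "'s \<Rightarrow> 'a::finite \<Rightarrow> real^'m"
  assumes [measurable]: "f \<in> borel_measurable M"
  shows "(\<lambda>x. greedy_policy phi (f x) s a) \<in> borel_measurable M"
  unfolding greedy_policy_def by measurable

lemma measurable_interpolating_policy[measurable]:
  assumes [measurable]: "\<And>s a. (\<lambda>x. mu x s a) \<in> borel_measurable M"
    "\<And>s a. (\<lambda>x. nu x s a) \<in> borel_measurable M"
    "\<And>s a. (\<lambda>x. Q x s a) \<in> borel_measurable M"
    "\<And>s. (\<lambda>x. d x s) \<in> borel_measurable M"
  shows "(\<lambda>x. interpolating_policy (mu x) (nu x) (Q x) (d x) s a) \<in> borel_measurable M"
  unfolding interpolating_policy_def interpolation_weight_def Pi_apply_def by measurable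

theorem lemma3:
  fixes phi :: "'s::finite \<Rightarrow> 'a::finite \<Rightarrow> real^'m"
  shows "\<exists>M :: ((real^'m) \<times> (real^'m)) \<Rightarrow> 's \<Rightarrow> 'a \<Rightarrow> real.
           (\<forall>s a. (\<lambda>p. M p s a) \<in> borel_measurable borel) \<and>
           (\<forall>\<theta> \<theta>'. stochastic_policy (M (\<theta>, \<theta>')) \<and>
              (\<lambda>s. Vtheta phi \<theta> s - Vtheta phi \<theta>' s)
                = Pi_apply (M (\<theta>, \<theta>')) (Phi_apply phi (\<theta> - \<theta>')))"
proof -
  define M where "M p = interpolating_policy
      (greedy_policy phi (fst p)) (greedy_policy phi (snd p))
      (Phi_apply phi (fst p - snd p)) (\<lambda>s. Vtheta phi (fst p) s - Vtheta phi (snd p) s)"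
    for p :: "(real^'m) \<times> (real^'m)"
  have [measurable]: "fst \<in> borel_measurable borel" "snd \<in> borel_measurable borel"
    by (intro borel_measurable_continuous_onI continuous_intros)+
  have "(\<lambda>p. M p s a) \<in> borel_measurable borel" for s a
    unfolding M_def by measurable
  moreover have "stochastic_policy (M (\<theta>, \<theta>'))"
    and "(\<lambda>s. Vtheta phi \<theta> s - Vtheta phi \<theta>' s) = Pi_apply (M (\<theta>, \<theta>')) (Phi_apply phi (\<theta> - \<theta>'))"
    for \<theta> \<theta>'
    using stochastic_policy_interpolating_policy[OF stochastic_policy_greedy_policy
            stochastic_policy_greedy_policy Vtheta_diff_bounds]
          Pi_apply_interpolating_policy[OF stochastic_policy_greedy_policy
            stochastic_policy_greedy_policy Vtheta_diff_bounds, symmetric]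
    by (simp_all add: M_def)
  ultimately show ?thesis by blast
qed

end
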